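(* Let $A$ be an AUF algebra and let $e\in A$ be a generating idempotent. Then the map $A\to\mathrm{End}^0_{-,eAe}(Ae)$ sending each $a\in A$ to the operator of left multiplication by $a$ on $Ae$ is a linear isomorphism.
   Context: All algebras are associative $\mathbb C$-algebras, not necessarily unital. An idempotent is $e$ with $e^2=e$. An algebra $A$ is AUF if there is a family $(e_i)_{i\in\mathfrak I}$ of mutually orthogonal idempotents with $\dim e_iAe_j<\infty$ and $A=\sum_{i,j}e_iAe_j$. A left $A$-module $M$ is quasicoherent if $\xi\in A\xi$ for all $\xi\in M$. Irreducible means nonzero with no nonzero proper submodules. An idempotent $e$ is generating if every irreducible quasicoherent left $A$-module is a quotient of $Ae$. For a quasicoherent left $A$-module $M$: $M^\vee$ is the space of linear functionals $\varphi$ on $M$ for which there is an idempotent $f\in A$ with $\varphi(f\eta)=\varphi(\eta)$ for all $\eta$; $\mathrm{End}^0(M)$ is the span in $\mathrm{End}(M)$ of the operators $\eta\mapsto\varphi(\eta)\xi$ with $\xi\in M$, $\varphi\in M^\vee$; if $M$ carries a right action of an algebra $C$ commuting with $A$, $\mathrm{End}^0_{-,C}(M)=\{T\in\mathrm{End}^0(M):T(\xi c)=T(\xi)c\ \forall\xi,c\}$. Here $Ae$ carries the right action of $eAe$ by multiplication. *)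

theory Defs
  imports Complex_Main
begin

text \<open>A (not necessarily unital) associative complex algebra: the carrier is the whole
  type 'a (class ring = non-unital ring), with a complex scalar multiplication sc.\<close>

definition calg :: "(complex \<Rightarrow> 'a::ring \<Rightarrow> 'a) \<Rightarrow> bool" where
  "calg sc \<longleftrightarrow> vector_space sc \<and>
     (\<forall>c x y. sc c (x * y) = sc c x * y \<and> sc c (x * y) = x * sc c y)"

definition AUF :: "(complex \<Rightarrow> 'a::ring \<Rightarrow> 'a) \<Rightarrow> bool" where
  "AUF sc \<longleftrightarrow> (\<exists>E::'a set.
     (\<forall>i\<in>E. i * i = i) \<and>
     (\<forall>i\<in>E. \<forall>j\<in>E. i \<noteq> j \<longrightarrow> i * j = 0) \<and>
     (\<forall>i\<in>E. \<forall>j\<in>E. \<exists>B. finite B \<and> {i * a * j | a. True} \<subseteq> module.span sc B) \<and>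
     (\<forall>x. \<exists>F g. finite F \<and> F \<subseteq> E \<times> E \<and>
        (\<forall>p\<in>F. g p \<in> {fst p * a * snd p | a. True}) \<and> x = (\<Sum>p\<in>F. g p)))"

record ('a, 'm) lmodule =
  mcar :: "'m set"
  madd :: "'m \<Rightarrow> 'm \<Rightarrow> 'm"
  mzero :: 'm
  msc :: "complex \<Rightarrow> 'm \<Rightarrow> 'm"
  mact :: "'a \<Rightarrow> 'm \<Rightarrow> 'm"

definition lmod :: "(complex \<Rightarrow> 'a::ring \<Rightarrow> 'a) \<Rightarrow> ('a, 'm) lmodule \<Rightarrow> bool" where
  "lmod sc M \<longleftrightarrow>
     mzero M \<in> mcar M \<and>
     (\<forall>x\<in>mcar M. \<forall>y\<in>mcar M. madd M x y \<in> mcar M) \<and>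
     (\<forall>c. \<forall>x\<in>mcar M. msc M c x \<in> mcar M) \<and>
     (\<forall>a. \<forall>x\<in>mcar M. mact M a x \<in> mcar M) \<and>
     (\<forall>x\<in>mcar M. \<forall>y\<in>mcar M. \<forall>w\<in>mcar M. madd M (madd M x y) w = madd M x (madd M y w)) \<and>
     (\<forall>x\<in>mcar M. \<forall>y\<in>mcar M. madd M x y = madd M y x) \<and>
     (\<forall>x\<in>mcar M. madd M (mzero M) x = x) \<and>
     (\<forall>x\<in>mcar M. madd M x (msc M (-1) x) = mzero M) \<and>
     (\<forall>c. \<forall>x\<in>mcar M. \<forall>y\<in>mcar M. msc M c (madd M x y) = madd M (msc M c x) (msc M c y)) \<and>
     (\<forall>c d. \<forall>x\<in>mcar M. msc M (c + d) x = madd M (msc M c x) (msc M d x)) \<and>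
     (\<forall>c d. \<forall>x\<in>mcar M. msc M (c * d) x = msc M c (msc M d x)) \<and>
     (\<forall>x\<in>mcar M. msc M 1 x = x) \<and>
     (\<forall>a b. \<forall>x\<in>mcar M. mact M (a + b) x = madd M (mact M a x) (mact M b x)) \<and>
     (\<forall>a. \<forall>x\<in>mcar M. \<forall>y\<in>mcar M. mact M a (madd M x y) = madd M (mact M a x) (mact M a y)) \<and>
     (\<forall>a b. \<forall>x\<in>mcar M. mact M (a * b) x = mact M a (mact M b x)) \<and>
     (\<forall>c a. \<forall>x\<in>mcar M. mact M (sc c a) x = msc M c (mact M a x)) \<and>
     (\<forall>c a. \<forall>x\<in>mcar M. mact M a (msc M c x) = msc M c (mact M a x))"

definition quasicoherent :: "('a, 'm) lmodule \<Rightarrow> bool" where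
  "quasicoherent M \<longleftrightarrow> (\<forall>\<xi>\<in>mcar M. \<exists>a. \<xi> = mact M a \<xi>)"

definition submodule :: "'m set \<Rightarrow> ('a, 'm) lmodule \<Rightarrow> bool" where
  "submodule N M \<longleftrightarrow> N \<subseteq> mcar M \<and> mzero M \<in> N \<and>
     (\<forall>x\<in>N. \<forall>y\<in>N. madd M x y \<in> N) \<and> (\<forall>c. \<forall>x\<in>N. msc M c x \<in> N) \<and>
     (\<forall>a. \<forall>x\<in>N. mact M a x \<in> N)"

definition irreducible_mod :: "('a, 'm) lmodule \<Rightarrow> bool" where
  "irreducible_mod M \<longleftrightarrow> mcar M \<noteq> {mzero M} \<and>
     (\<forall>N. submodule N M \<longrightarrow> N = {mzero M} \<or> N = mcar M)"

definition modhom :: "('a, 'm) lmodule \<Rightarrow> ('a, 'n) lmodule \<Rightarrow> ('m \<Rightarrow> 'n) \<Rightarrow> bool" where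
  "modhom M N f \<longleftrightarrow> (\<forall>x\<in>mcar M. f x \<in> mcar N) \<and>
     (\<forall>x\<in>mcar M. \<forall>y\<in>mcar M. f (madd M x y) = madd N (f x) (f y)) \<and>
     (\<forall>c. \<forall>x\<in>mcar M. f (msc M c x) = msc N c (f x)) \<and>
     (\<forall>a. \<forall>x\<in>mcar M. f (mact M a x) = mact N a (f x))"

definition Ae_mod :: "(complex \<Rightarrow> 'a::ring \<Rightarrow> 'a) \<Rightarrow> 'a \<Rightarrow> ('a, 'a) lmodule" where
  "Ae_mod sc e = \<lparr>mcar = {a * e | a. True}, madd = (+), mzero = 0, msc = sc, mact = (*)\<rparr>"

text \<open>Generating idempotent. Irreducible quasicoherent modules are cyclic, hence
  isomorphic to quotients A/L; it suffices to quantify over modules whose elements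
  are subsets of A.\<close>

definition generating :: "(complex \<Rightarrow> 'a::ring \<Rightarrow> 'a) \<Rightarrow> 'a \<Rightarrow> bool" where
  "generating sc e \<longleftrightarrow> e * e = e \<and>
     (\<forall>M :: ('a, 'a set) lmodule. lmod sc M \<and> quasicoherent M \<and> irreducible_mod M \<longrightarrow>
        (\<exists>f. modhom (Ae_mod sc e) M f \<and> f ` mcar (Ae_mod sc e) = mcar M))"

definition mdual :: "('a::ring, 'm) lmodule \<Rightarrow> ('m \<Rightarrow> complex) set" where
  "mdual M = {\<phi>. (\<forall>x\<in>mcar M. \<forall>y\<in>mcar M. \<phi> (madd M x y) = \<phi> x + \<phi> y) \<and>
                 (\<forall>c. \<forall>x\<in>mcar M. \<phi> (msc M c x) = c * \<phi> x) \<and>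
                 (\<exists>f. f * f = f \<and> (\<forall>\<eta>\<in>mcar M. \<phi> (mact M f \<eta>) = \<phi> \<eta>))}"

primrec msum :: "('a, 'm) lmodule \<Rightarrow> (nat \<Rightarrow> 'm) \<Rightarrow> nat \<Rightarrow> 'm" where
  "msum M g 0 = mzero M"
| "msum M g (Suc n) = madd M (msum M g n) (g n)"

text \<open>End^0(M): the span of the rank one operators; operators are represented as
  functions on 'm which vanish (= mzero) off the carrier.\<close>

definition End0 :: "('a::ring, 'm) lmodule \<Rightarrow> ('m \<Rightarrow> 'm) set" where
  "End0 M = {T. (\<forall>\<eta>. \<eta> \<notin> mcar M \<longrightarrow> T \<eta> = mzero M) \<and>
     (\<exists>n (c::nat \<Rightarrow> complex) \<phi> \<xi>. (\<forall>k<n. \<phi> k \<in> mdual M \<and> \<xi> k \<in> mcar M) \<and>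
        (\<forall>\<eta>\<in>mcar M. T \<eta> = msum M (\<lambda>k. msc M (c k * \<phi> k \<eta>) (\<xi> k)) n))}"

definition End0_right :: "('a::ring, 'm) lmodule \<Rightarrow> ('m \<Rightarrow> 'b \<Rightarrow> 'm) \<Rightarrow> 'b set \<Rightarrow> ('m \<Rightarrow> 'm) set" where
  "End0_right M ract C = {T \<in> End0 M. \<forall>\<xi>\<in>mcar M. \<forall>c\<in>C. T (ract \<xi> c) = ract (T \<xi>) c}"

definition Lmul :: "(complex \<Rightarrow> 'a::ring \<Rightarrow> 'a) \<Rightarrow> 'a \<Rightarrow> 'a \<Rightarrow> 'a \<Rightarrow> 'a" where
  "Lmul sc e a = (\<lambda>\<eta>. if \<eta> \<in> mcar (Ae_mod sc e) then a * \<eta> else 0)"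

end

theory Submission
  imports Defs
begin

(* Since e is generating, the ideal AeA is all of A: otherwise some idempotent l of the AUF
   family lies outside AeA, and a submodule N of Al, maximal among those containing AeA \<inter> Al
   but not l, yields an irreducible quasicoherent module Al/N which e annihilates, so it is not
   a quotient of Ae.
   Hence an element annihilating Ae annihilates A, and vanishes because A has local units: the
   map is injective. For T in End^0(Ae) commuting with eAe we have T(uev\<eta>) = T(ue)ev\<eta>,
   so every x in AeA = A acts through T as left multiplication by some element; choosing for x
   a common right unit of the idempotents that fix the functionals of T shows that T itself is
   a left multiplication. Conversely left multiplication lies in End^0(Ae) because every corner
   jAe, j in the family, is finite dimensional. *)

locale complex_algebra = vector_space sc for sc :: "complex \<Rightarrow> 'a::ring \<Rightarrow> 'a" +
  assumes mult_scale_left [simp]: "sc c x * y = sc c (x * y)"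
    and mult_scale_right [simp]: "x * sc c y = sc c (x * y)"

lemma calg_imp_complex_algebra:
  assumes "calg sc"
  shows "complex_algebra sc"
proof -
  have "vector_space sc" and scale_mult: "\<forall>c x y. sc c (x * y) = sc c x * y \<and> sc c (x * y) = x * sc c y"
    using assms unfolding calg_def by (rule conjunct1, rule conjunct2)
  then show ?thesis
    by (intro complex_algebra.intro complex_algebra_axioms.intro)
      (simp_all add: scale_mult[rule_format, THEN conjunct1, symmetric]
        scale_mult[rule_format, THEN conjunct2, symmetric])
qed

locale auf_algebra = complex_algebra sc for sc :: "complex \<Rightarrow> 'a::ring \<Rightarrow> 'a" +
  fixes E :: "'a set"
  assumes idem: "i \<in> E \<Longrightarrow> i * i = i"
    and orth: "i \<in> E \<Longrightarrow> j \<in> E \<Longrightarrow> i \<noteq> j \<Longrightarrow> i * j = 0"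
    and corner_finite_span: "i \<in> E \<Longrightarrow> j \<in> E \<Longrightarrow> \<exists>B. finite B \<and> {i * a * j |a. True} \<subseteq> span B"
    and corner_decomposition: "\<exists>F g. finite F \<and> F \<subseteq> E \<times> E \<and>
       (\<forall>p\<in>F. g p \<in> {fst p * a * snd p |a. True}) \<and> x = (\<Sum>p\<in>F. g p)"

lemma AUF_imp_auf_algebra:
  assumes "calg sc" "AUF sc"
  obtains E where "auf_algebra sc E"
proof -
  from assms(2) obtain E where idem: "\<forall>i\<in>E. i * i = i"
    and orth: "\<forall>i\<in>E. \<forall>j\<in>E. i \<noteq> j \<longrightarrow> i * j = 0"
    and fin: "\<forall>i\<in>E. \<forall>j\<in>E. \<exists>B. finite B \<and> {i * a * j |a. True} \<subseteq> module.span sc B"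
    and dec: "\<forall>x. \<exists>F g. finite F \<and> F \<subseteq> E \<times> E \<and>
       (\<forall>p\<in>F. g p \<in> {fst p * a * snd p |a. True}) \<and> x = (\<Sum>p\<in>F. g p)"
    unfolding AUF_def by (elim exE conjE)
  have "auf_algebra sc E"
  proof (intro auf_algebra.intro auf_algebra_axioms.intro calg_imp_complex_algebra[OF assms(1)])
    show "\<And>i. i \<in> E \<Longrightarrow> i * i = i" using idem by blast
    show "\<And>i j. i \<in> E \<Longrightarrow> j \<in> E \<Longrightarrow> i \<noteq> j \<Longrightarrow> i * j = 0" using orth by blast
    show "\<And>i j. i \<in> E \<Longrightarrow> j \<in> E \<Longrightarrow> \<exists>B. finite B \<and> {i * a * j |a. True} \<subseteq> module.span sc B"
      using fin by blast
    show "\<And>x. \<exists>F g. finite F \<and> F \<subseteq> E \<times> E \<and>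
       (\<forall>p\<in>F. g p \<in> {fst p * a * snd p |a. True}) \<and> x = (\<Sum>p\<in>F. g p)"
      using dec by blast
  qed
  then show ?thesis by (rule that)
qed

definition left_ideal :: "'a::times \<Rightarrow> 'a set" where
  "left_ideal x = {a * x |a. True}"

lemma mult_in_left_ideal [simp]: "a * x \<in> left_ideal x"
  unfolding left_ideal_def by blast

lemma left_ideal_zero [simp]: "(0::'a::ring) \<in> left_ideal x"
  using mult_in_left_ideal[of 0 x] by simp

lemma idempotent_in_left_ideal: "e * e = e \<Longrightarrow> e \<in> left_ideal e"
  using mult_in_left_ideal[of e e] by simp

lemma left_ideal_add:
  fixes l :: "'a::ring"
  assumes "x \<in> left_ideal l" "y \<in> left_ideal l"
  shows "x + y \<in> left_ideal l"
proof -
  from assms[unfolded left_ideal_def] obtain a b where "x = a * l" "y = b * l" by blast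
  then have "x + y = (a + b) * l" by (simp add: distrib_right)
  then show ?thesis by simp
qed

lemma left_ideal_mult:
  fixes l :: "'a::ring"
  assumes "x \<in> left_ideal l"
  shows "b * x \<in> left_ideal l"
proof -
  from assms[unfolded left_ideal_def] obtain a where "x = a * l" by blast
  then have "b * x = (b * a) * l" by (simp add: mult.assoc)
  then show ?thesis by simp
qed

lemma (in complex_algebra) left_ideal_scale:
  assumes "x \<in> left_ideal l"
  shows "sc c x \<in> left_ideal l"
proof -
  from assms[unfolded left_ideal_def] obtain a where "x = a * l" by blast
  then have "sc c x = sc c a * l" by simp
  then show ?thesis by (simp only: mult_in_left_ideal)
qed

lemma Ae_mod_simps [simp]:
  "mcar (Ae_mod sc e) = left_ideal e" "madd (Ae_mod sc e) = (+)" "mzero (Ae_mod sc e) = 0"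
  "msc (Ae_mod sc e) = sc" "mact (Ae_mod sc e) = (*)"
  by (simp_all add: Ae_mod_def left_ideal_def)

lemma msum_Ae_mod [simp]: "msum (Ae_mod sc e) g n = (\<Sum>k<n. g k)"
  by (induction n) simp_all

section \<open>Local units\<close>

context auf_algebra
begin

lemma mult_sum_idempotents_right:
  assumes "j \<in> S" "finite S" "S \<subseteq> E"
  shows "y * j * \<Sum>S = y * j"
proof -
  have "y * j * \<Sum>S = (\<Sum>s\<in>S. y * (j * s))"
    by (simp add: sum_distrib_left mult.assoc)
  also have "\<dots> = y * (j * j) + (\<Sum>s\<in>S - {j}. y * (j * s))"
    using assms by (simp add: sum.remove)
  also have "(\<Sum>s\<in>S - {j}. y * (j * s)) = 0"
  proof (intro sum.neutral ballI)
    fix s assume "s \<in> S - {j}"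
    with assms have "j * s = 0" by (intro orth) auto
    then show "y * (j * s) = 0" by simp
  qed
  moreover have "j * j = j" using assms idem by blast
  ultimately show ?thesis by (simp add: mult.assoc)
qed

lemma sum_idempotents_mult_left:
  assumes "i \<in> S" "finite S" "S \<subseteq> E"
  shows "\<Sum>S * (i * y) = i * y"
proof -
  have "\<Sum>S * (i * y) = (\<Sum>s\<in>S. (s * i) * y)"
    by (simp add: sum_distrib_right mult.assoc)
  also have "\<dots> = (i * i) * y + (\<Sum>s\<in>S - {i}. (s * i) * y)"
    using assms by (simp add: sum.remove)
  also have "(\<Sum>s\<in>S - {i}. (s * i) * y) = 0"
  proof (intro sum.neutral ballI)
    fix s assume "s \<in> S - {i}"
    with assms have "s * i = 0" by (intro orth) auto
    then show "(s * i) * y = 0" by simp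
  qed
  moreover have "i * i = i" using assms idem by blast
  ultimately show ?thesis by simp
qed

lemma right_unit_eventually:
  "\<exists>S. finite S \<and> S \<subseteq> E \<and> (\<forall>T. finite T \<longrightarrow> S \<subseteq> T \<longrightarrow> T \<subseteq> E \<longrightarrow> x * \<Sum>T = (x :: 'a))"
proof -
  obtain F g where F: "finite F" "F \<subseteq> E \<times> E"
    and g: "\<And>p. p \<in> F \<Longrightarrow> g p \<in> {fst p * a * snd p |a. True}" and x: "x = (\<Sum>p\<in>F. g p)"
    using corner_decomposition[of x] by blast
  have "x * \<Sum>T = x" if T: "finite T" "snd ` F \<subseteq> T" "T \<subseteq> E" for T
  proof -
    have "g p * \<Sum>T = g p" if p: "p \<in> F" for p
    proof -
      obtain a where "g p = fst p * a * snd p" using g[OF p] by blast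
      moreover have "snd p \<in> T" using T(2) p by blast
      ultimately show ?thesis using mult_sum_idempotents_right[OF _ T(1,3)] by simp
    qed
    then show ?thesis unfolding x by (simp add: sum_distrib_right)
  qed
  moreover have "finite (snd ` F)" "snd ` F \<subseteq> E" using F by auto
  ultimately show ?thesis by blast
qed

lemma local_right_unit:
  assumes "finite X"
  shows "\<exists>S. finite S \<and> S \<subseteq> E \<and> (\<forall>x\<in>X. x * \<Sum>S = x)"
proof -
  have "\<exists>S. finite S \<and> S \<subseteq> E \<and>
    (\<forall>T. finite T \<longrightarrow> S \<subseteq> T \<longrightarrow> T \<subseteq> E \<longrightarrow> (\<forall>x\<in>X. x * \<Sum>T = x))"
    using assms
  proof (induction X rule: finite_induct)
    case empty
    show ?case by (intro exI[of _ "{}"]) simp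
  next
    case (insert x X)
    from insert.IH obtain S where S: "finite S" "S \<subseteq> E"
      and unit_S: "\<And>T. finite T \<Longrightarrow> S \<subseteq> T \<Longrightarrow> T \<subseteq> E \<Longrightarrow> \<forall>x\<in>X. x * \<Sum>T = x"
      by blast
    obtain S' where S': "finite S'" "S' \<subseteq> E"
      and unit_S': "\<And>T. finite T \<Longrightarrow> S' \<subseteq> T \<Longrightarrow> T \<subseteq> E \<Longrightarrow> x * \<Sum>T = x"
      using right_unit_eventually[of x] by blast
    have "\<forall>y\<in>insert x X. y * \<Sum>T = y" if "finite T" "S \<union> S' \<subseteq> T" "T \<subseteq> E" for T
      using unit_S[of T] unit_S'[of T] that by simp
    with S S' show ?case by (intro exI[of _ "S \<union> S'"]) simp
  qed
  then obtain S where "finite S" "S \<subseteq> E"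
    and "\<And>T. finite T \<Longrightarrow> S \<subseteq> T \<Longrightarrow> T \<subseteq> E \<Longrightarrow> \<forall>x\<in>X. x * \<Sum>T = x"
    by blast
  then show ?thesis by blast
qed

lemma local_left_unit: "\<exists>u. u * x = (x :: 'a)"
proof -
  obtain F g where F: "finite F" "F \<subseteq> E \<times> E"
    and g: "\<And>p. p \<in> F \<Longrightarrow> g p \<in> {fst p * a * snd p |a. True}" and x: "x = (\<Sum>p\<in>F. g p)"
    using corner_decomposition[of x] by blast
  have "\<Sum>(fst ` F) * g p = g p" if p: "p \<in> F" for p
  proof -
    from g[OF p] obtain a where "g p = fst p * a * snd p" by blast
    then have "g p = fst p * (a * snd p)" by (simp add: mult.assoc)
    moreover have "fst ` F \<subseteq> E" using F(2) by auto
    ultimately show ?thesis using sum_idempotents_mult_left[of "fst p" "fst ` F"] F(1) p by simp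
  qed
  then have "\<Sum>(fst ` F) * x = x" unfolding x by (simp add: sum_distrib_left)
  then show ?thesis ..
qed

end

section \<open>The ideal AeA\<close>

inductive_set AeA :: "'a::ring \<Rightarrow> 'a set" for e where
  zero: "0 \<in> AeA e"
| generator: "u * e * v \<in> AeA e"
| add: "x \<in> AeA e \<Longrightarrow> y \<in> AeA e \<Longrightarrow> x + y \<in> AeA e"

lemma AeA_mult_left: "x \<in> AeA e \<Longrightarrow> a * x \<in> AeA e"
proof (induction rule: AeA.induct)
  case (generator u v)
  show ?case using AeA.generator[of "a * u" e v] by (simp add: mult.assoc)
qed (simp_all add: AeA.zero AeA.add distrib_left)

lemma AeA_mult_right: "x \<in> AeA e \<Longrightarrow> x * a \<in> AeA e"
proof (induction rule: AeA.induct)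
  case (generator u v)
  show ?case using AeA.generator[of u e "v * a"] by (simp add: mult.assoc)
qed (simp_all add: AeA.zero AeA.add distrib_right)

lemma AeA_sum: "finite S \<Longrightarrow> (\<And>s. s \<in> S \<Longrightarrow> f s \<in> AeA e) \<Longrightarrow> sum f S \<in> AeA e"
  by (induction S rule: finite_induct) (auto intro: AeA.intros)

lemma AeA_annihilator:
  assumes "\<And>y. x * (y * e) = 0" and "j \<in> AeA e"
  shows "x * j = 0"
  using assms(2)
proof (induction rule: AeA.induct)
  case (generator u v)
  have "x * (u * e * v) = x * (u * e) * v" by (simp add: mult.assoc)
  with assms(1)[of u] show ?case by simp
qed (simp_all add: distrib_left)

lemma (in complex_algebra) AeA_scale: "x \<in> AeA e \<Longrightarrow> sc c x \<in> AeA e"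
proof (induction rule: AeA.induct)
  case (generator u v)
  show ?case using AeA.generator[of "sc c u" e v] by simp
qed (simp_all add: AeA.zero AeA.add scale_right_distrib)

lemma (in complex_algebra) submodule_AeA_Int: "submodule (AeA e \<inter> left_ideal l) (Ae_mod sc l)"
  unfolding submodule_def Ae_mod_simps
proof (intro conjI ballI allI)
  show "0 \<in> AeA e \<inter> left_ideal l" using AeA.zero left_ideal_zero by blast
next
  fix x y assume x: "x \<in> AeA e \<inter> left_ideal l" and y: "y \<in> AeA e \<inter> left_ideal l"
  show "x + y \<in> AeA e \<inter> left_ideal l"
    using AeA.add[OF IntD1[OF x] IntD1[OF y]] left_ideal_add[OF IntD2[OF x] IntD2[OF y]] by (rule IntI)
next
  fix c x assume x: "x \<in> AeA e \<inter> left_ideal l"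
  show "sc c x \<in> AeA e \<inter> left_ideal l"
    using AeA_scale[OF IntD1[OF x]] left_ideal_scale[OF IntD2[OF x]] by (rule IntI)
next
  fix b x assume x: "x \<in> AeA e \<inter> left_ideal l"
  show "b * x \<in> AeA e \<inter> left_ideal l"
    using AeA_mult_left[OF IntD1[OF x]] left_ideal_mult[OF IntD2[OF x]] by (rule IntI)
qed blast

section \<open>The quotient module Al/N\<close>

lemma submodule_chain_Union:
  assumes "C \<noteq> {}" "subset.chain {N. submodule N M} C"
  shows "submodule (\<Union>C) M"
proof -
  have sub: "submodule N M" if "N \<in> C" for N
    using assms(2) that by (auto simp: subset_chain_def)
  have common: "\<exists>N\<in>C. x \<in> N \<and> y \<in> N" if "x \<in> \<Union>C" "y \<in> \<Union>C" for x y
    using assms(2) that unfolding subset_chain_def by blast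
  show ?thesis
    unfolding submodule_def
  proof (intro conjI ballI allI)
    show "\<Union>C \<subseteq> mcar M" using sub unfolding submodule_def by blast
    show "mzero M \<in> \<Union>C" using assms(1) sub unfolding submodule_def by blast
  next
    fix x y assume "x \<in> \<Union>C" "y \<in> \<Union>C"
    with common obtain N where "N \<in> C" "x \<in> N" "y \<in> N" by blast
    with sub[of N] show "madd M x y \<in> \<Union>C" unfolding submodule_def by blast
  next
    fix c x assume "x \<in> \<Union>C"
    then obtain N where "N \<in> C" "x \<in> N" by blast
    with sub[of N] show "msc M c x \<in> \<Union>C" unfolding submodule_def by blast
  next
    fix a x assume "x \<in> \<Union>C"
    then obtain N where "N \<in> C" "x \<in> N" by blast
    with sub[of N] show "mact M a x \<in> \<Union>C" unfolding submodule_def by blast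
  qed
qed

lemma maximal_submodule_avoiding:
  assumes "submodule N0 M" "x \<notin> N0"
  obtains N where "submodule N M" "N0 \<subseteq> N" "x \<notin> N"
    "\<And>N'. submodule N' M \<Longrightarrow> N \<subseteq> N' \<Longrightarrow> x \<notin> N' \<Longrightarrow> N' = N"
proof -
  define P where "P = {N. submodule N M \<and> N0 \<subseteq> N \<and> x \<notin> N}"
  have "\<exists>N\<in>P. \<forall>N'\<in>P. N \<subseteq> N' \<longrightarrow> N' = N"
  proof (rule subset_Zorn_nonempty)
    have "N0 \<in> P" using assms unfolding P_def by simp
    then show "P \<noteq> {}" by blast
  next
    fix C assume C: "C \<noteq> {}" "subset.chain P C"
    then have "C \<subseteq> P" by (simp add: subset_chain_def)
    have "subset.chain {N. submodule N M} C"
      using C(2) unfolding P_def subset_chain_def by auto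
    with C(1) have "submodule (\<Union>C) M" by (rule submodule_chain_Union)
    moreover from C(1) obtain N where "N \<in> C" by blast
    with \<open>C \<subseteq> P\<close> have "N0 \<subseteq> \<Union>C" unfolding P_def by blast
    moreover have "x \<notin> \<Union>C" using \<open>C \<subseteq> P\<close> unfolding P_def by blast
    ultimately show "\<Union>C \<in> P" unfolding P_def by simp
  qed
  then obtain N where "N \<in> P" and max: "\<And>N'. N' \<in> P \<Longrightarrow> N \<subseteq> N' \<Longrightarrow> N' = N" by blast
  show ?thesis
  proof (rule that)
    show "submodule N M" "N0 \<subseteq> N" "x \<notin> N" using \<open>N \<in> P\<close> unfolding P_def by simp_all
  next
    fix N' assume "submodule N' M" "N \<subseteq> N'" "x \<notin> N'"
    moreover have "N0 \<subseteq> N'" using \<open>N \<in> P\<close> \<open>N \<subseteq> N'\<close> unfolding P_def by blast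
    ultimately show "N' = N" using max unfolding P_def by simp
  qed
qed

definition coset :: "'a set \<Rightarrow> 'a::ring \<Rightarrow> 'a set" where
  "coset N x = (+) x ` N"

(* Adding N in msc and mact makes the result a whole coset also when c = 0 or a annihilates X. *)
definition Al_quotient :: "(complex \<Rightarrow> 'a \<Rightarrow> 'a) \<Rightarrow> 'a::ring \<Rightarrow> 'a set \<Rightarrow> ('a, 'a set) lmodule" where
  "Al_quotient sc l N = \<lparr>mcar = coset N ` left_ideal l,
     madd = \<lambda>X Y. {x + y |x y. x \<in> X \<and> y \<in> Y}, mzero = N,
     msc = \<lambda>c X. {sc c x + n |x n. x \<in> X \<and> n \<in> N},
     mact = \<lambda>a X. {a * x + n |x n. x \<in> X \<and> n \<in> N}\<rparr>"

context complex_algebra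
begin

context
  fixes l :: 'a and N :: "'a set"
  assumes N: "submodule N (Ae_mod sc l)"
begin

lemma submodule_memD:
  "0 \<in> N" "x \<in> N \<Longrightarrow> y \<in> N \<Longrightarrow> x + y \<in> N" "x \<in> N \<Longrightarrow> sc c x \<in> N"
  "x \<in> N \<Longrightarrow> a * x \<in> N" "x \<in> N \<Longrightarrow> x \<in> left_ideal l"
  using N unfolding submodule_def by auto

lemma submodule_diff: "x \<in> N \<Longrightarrow> y \<in> N \<Longrightarrow> x - y \<in> N"
  using submodule_memD(2)[of x "sc (-1) y"] submodule_memD(3)[of y "-1"] by simp

lemma coset_self: "x \<in> coset N x"
  using submodule_memD(1) unfolding coset_def by (auto intro: image_eqI[of _ _ 0])

lemma coset_eq_iff: "coset N x = coset N y \<longleftrightarrow> x - y \<in> N"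
proof
  assume "coset N x = coset N y"
  with coset_self obtain n where "n \<in> N" "x = y + n" unfolding coset_def by auto
  then show "x - y \<in> N" by simp
next
  assume xy: "x - y \<in> N"
  show "coset N x = coset N y"
  proof (intro set_eqI iffI)
    fix z assume "z \<in> coset N x"
    then obtain n where "n \<in> N" "z = y + ((x - y) + n)" unfolding coset_def by auto
    with xy show "z \<in> coset N y" unfolding coset_def by (blast intro: submodule_memD(2))
  next
    fix z assume "z \<in> coset N y"
    then obtain n where "n \<in> N" "z = x + (n - (x - y))" unfolding coset_def by auto
    with xy show "z \<in> coset N x" unfolding coset_def by (blast intro: submodule_diff)
  qed
qed

lemma Al_quotient_add: "madd (Al_quotient sc l N) (coset N x) (coset N y) = coset N (x + y)"
proof (intro set_eqI iffI)
  fix z assume "z \<in> madd (Al_quotient sc l N) (coset N x) (coset N y)"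
  then obtain n m where "n \<in> N" "m \<in> N" "z = (x + y) + (n + m)"
    unfolding Al_quotient_def coset_def by (auto simp: ac_simps)
  then show "z \<in> coset N (x + y)" unfolding coset_def by (blast intro: submodule_memD(2))
next
  fix z assume "z \<in> coset N (x + y)"
  then obtain n where "n \<in> N" "z = (x + n) + y" unfolding coset_def by (auto simp: ac_simps)
  moreover from \<open>n \<in> N\<close> have "x + n \<in> coset N x" unfolding coset_def by blast
  ultimately show "z \<in> madd (Al_quotient sc l N) (coset N x) (coset N y)"
    unfolding Al_quotient_def using coset_self by auto
qed

lemma Al_quotient_scale: "msc (Al_quotient sc l N) c (coset N x) = coset N (sc c x)"
proof (intro set_eqI iffI)
  fix z assume "z \<in> msc (Al_quotient sc l N) c (coset N x)"
  then obtain n m where "n \<in> N" "m \<in> N" "z = sc c x + (sc c n + m)"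
    unfolding Al_quotient_def coset_def by (auto simp: scale_right_distrib ac_simps)
  then show "z \<in> coset N (sc c x)" unfolding coset_def by (blast intro: submodule_memD(2,3))
next
  fix z assume "z \<in> coset N (sc c x)"
  then obtain n where "n \<in> N" "z = sc c x + n" unfolding coset_def by auto
  then show "z \<in> msc (Al_quotient sc l N) c (coset N x)"
    unfolding Al_quotient_def using coset_self by auto
qed

lemma Al_quotient_act: "mact (Al_quotient sc l N) a (coset N x) = coset N (a * x)"
proof (intro set_eqI iffI)
  fix z assume "z \<in> mact (Al_quotient sc l N) a (coset N x)"
  then obtain n m where "n \<in> N" "m \<in> N" "z = a * x + (a * n + m)"
    unfolding Al_quotient_def coset_def by (auto simp: distrib_left ac_simps)
  then show "z \<in> coset N (a * x)" unfolding coset_def by (blast intro: submodule_memD(2,4))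
next
  fix z assume "z \<in> coset N (a * x)"
  then obtain n where "n \<in> N" "z = a * x + n" unfolding coset_def by auto
  then show "z \<in> mact (Al_quotient sc l N) a (coset N x)"
    unfolding Al_quotient_def using coset_self by auto
qed

lemma Al_quotient_zero: "mzero (Al_quotient sc l N) = coset N 0"
  by (simp add: Al_quotient_def coset_def)

lemma Al_quotient_carrier: "mcar (Al_quotient sc l N) = coset N ` left_ideal l"
  by (simp add: Al_quotient_def)

lemma lmod_Al_quotient: "lmod sc (Al_quotient sc l N)"
proof -
  have ball: "(\<forall>X\<in>mcar (Al_quotient sc l N). P X) \<longleftrightarrow> (\<forall>x\<in>left_ideal l. P (coset N x))" for P
    unfolding Al_quotient_carrier by blast
  have mem: "coset N x \<in> mcar (Al_quotient sc l N)" if "x \<in> left_ideal l" for x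
    using that unfolding Al_quotient_carrier by blast
  show ?thesis
    unfolding lmod_def ball Al_quotient_zero
    by (intro conjI ballI allI)
      (simp_all add: Al_quotient_add Al_quotient_scale Al_quotient_act mem left_ideal_add
        left_ideal_scale left_ideal_mult ac_simps scale_right_distrib scale_left_distrib
        distrib_left distrib_right)
qed

end

end

section \<open>Generating idempotents are full\<close>

context complex_algebra
begin

lemma irreducible_Al_quotient:
  assumes N: "submodule N (Ae_mod sc l)" and l: "l * l = l" "l \<notin> N"
    and max: "\<And>N'. submodule N' (Ae_mod sc l) \<Longrightarrow> N \<subseteq> N' \<Longrightarrow> l \<notin> N' \<Longrightarrow> N' = N"
  shows "irreducible_mod (Al_quotient sc l N)"
  unfolding irreducible_mod_def
proof (intro conjI allI impI)
  let ?Q = "Al_quotient sc l N"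
  from l(1) have "l \<in> left_ideal l" by (rule idempotent_in_left_ideal)
  then have "coset N l \<in> mcar ?Q" using Al_quotient_carrier[OF N] by blast
  moreover have "coset N l \<noteq> coset N 0" using coset_eq_iff[OF N] l(2) by simp
  ultimately show "mcar ?Q \<noteq> {mzero ?Q}" using Al_quotient_zero[OF N] by auto
next
  let ?Q = "Al_quotient sc l N"
  fix S assume S: "submodule S ?Q"
  then have S_sub: "S \<subseteq> coset N ` left_ideal l" and S_zero: "coset N 0 \<in> S"
    and S_add: "\<And>X Y. X \<in> S \<Longrightarrow> Y \<in> S \<Longrightarrow> madd ?Q X Y \<in> S"
    and S_scale: "\<And>c X. X \<in> S \<Longrightarrow> msc ?Q c X \<in> S"
    and S_act: "\<And>a X. X \<in> S \<Longrightarrow> mact ?Q a X \<in> S"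
    unfolding submodule_def Al_quotient_carrier[OF N] Al_quotient_zero[OF N] by blast+
  define N' where "N' = {x \<in> left_ideal l. coset N x \<in> S}"
  have N': "submodule N' (Ae_mod sc l)"
    unfolding submodule_def Ae_mod_simps N'_def
    using S_zero S_add[of "coset N _" "coset N _"] S_scale[of "coset N _"] S_act[of "coset N _"]
    by (auto simp: Al_quotient_add[OF N] Al_quotient_scale[OF N] Al_quotient_act[OF N]
        left_ideal_add left_ideal_scale left_ideal_mult)
  have "N \<subseteq> N'"
  proof
    fix x assume "x \<in> N"
    then have "coset N x = coset N 0" using coset_eq_iff[OF N] by simp
    with \<open>x \<in> N\<close> S_zero show "x \<in> N'" unfolding N'_def using submodule_memD(5)[OF N] by simp
  qed
  show "S = {mzero ?Q} \<or> S = mcar ?Q"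
  proof (cases "l \<in> N'")
    case True
    have "coset N (a * l) \<in> S" for a
      using S_act[of "coset N l" a] True unfolding N'_def Al_quotient_act[OF N] by simp
    then have "mcar ?Q \<subseteq> S"
      unfolding Al_quotient_carrier[OF N] left_ideal_def by blast
    with S_sub show ?thesis unfolding Al_quotient_carrier[OF N] by blast
  next
    case False
    with N' \<open>N \<subseteq> N'\<close> max have "N' = N" by blast
    have "X = coset N 0" if "X \<in> S" for X
    proof -
      from that S_sub obtain x where "x \<in> left_ideal l" "X = coset N x" by blast
      with that \<open>N' = N\<close> have "x \<in> N" unfolding N'_def by blast
      with \<open>X = coset N x\<close> show ?thesis using coset_eq_iff[OF N] by simp
    qed
    with S_zero show ?thesis unfolding Al_quotient_zero[OF N] by blast
  qed
qed

lemma quasicoherent_Al_quotient: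
  assumes N: "submodule N (Ae_mod sc l)" and unit: "\<And>x::'a. \<exists>u. u * x = x"
  shows "quasicoherent (Al_quotient sc l N)"
  unfolding quasicoherent_def Al_quotient_carrier[OF N]
proof
  fix X assume "X \<in> coset N ` left_ideal l"
  then obtain x where X: "X = coset N x" by blast
  obtain u where "u * x = x" using unit by blast
  with X show "\<exists>a. X = mact (Al_quotient sc l N) a X"
    by (intro exI[of _ u]) (simp add: Al_quotient_act[OF N])
qed

lemma modhom_Ae_Al_quotient_trivial:
  assumes N: "submodule N (Ae_mod sc l)" and e: "e * e = e" and AeA: "AeA e \<inter> left_ideal l \<subseteq> N"
    and f: "modhom (Ae_mod sc e) (Al_quotient sc l N) f" and \<eta>: "\<eta> \<in> left_ideal e"
  shows "f \<eta> = mzero (Al_quotient sc l N)"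
proof -
  let ?Q = "Al_quotient sc l N"
  have e_in: "e \<in> left_ideal e" using e by (rule idempotent_in_left_ideal)
  have f_act: "f (a * x) = mact ?Q a (f x)" if "x \<in> left_ideal e" for a x
    using f that unfolding modhom_def by simp
  from f e_in obtain y where y: "y \<in> left_ideal l" "f e = coset N y"
    unfolding modhom_def Al_quotient_carrier[OF N] by auto
  have "coset N y = coset N (e * y)"
    using f_act[OF e_in, of e] e y(2) by (simp add: Al_quotient_act[OF N])
  then have "y - e * y \<in> N" using coset_eq_iff[OF N] by simp
  moreover have "e * y \<in> N"
  proof -
    have "e * y \<in> AeA e" using AeA.generator[of e e y] e by simp
    moreover have "e * y \<in> left_ideal l" using y(1) by (rule left_ideal_mult)
    ultimately show ?thesis using AeA by blast
  qed
  ultimately have "y - e * y + e * y \<in> N" by (rule submodule_memD(2)[OF N])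
  then have f_e: "f e = coset N 0" using y(2) coset_eq_iff[OF N] by simp
  from \<eta> obtain a where "\<eta> = a * e" unfolding left_ideal_def by blast
  then show ?thesis using f_act[OF e_in, of a] f_e by (simp add: Al_quotient_act[OF N] Al_quotient_zero[OF N])
qed

end

context auf_algebra
begin

lemma idempotent_in_AeA:
  assumes gen: "generating sc e" and l: "l \<in> E"
  shows "l \<in> AeA e"
proof (rule ccontr)
  assume "l \<notin> AeA e"
  then have "l \<notin> AeA e \<inter> left_ideal l" by blast
  then obtain N where N: "submodule N (Ae_mod sc l)" "AeA e \<inter> left_ideal l \<subseteq> N" "l \<notin> N"
    and max: "\<And>N'. submodule N' (Ae_mod sc l) \<Longrightarrow> N \<subseteq> N' \<Longrightarrow> l \<notin> N' \<Longrightarrow> N' = N"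
    by (rule maximal_submodule_avoiding[OF submodule_AeA_Int]) (rule that)
  let ?Q = "Al_quotient sc l N"
  have "lmod sc ?Q \<and> quasicoherent ?Q \<and> irreducible_mod ?Q"
    using lmod_Al_quotient[OF N(1)] quasicoherent_Al_quotient[OF N(1) local_left_unit]
      irreducible_Al_quotient[OF N(1) idem[OF l] N(3) max] by blast
  moreover have "\<forall>M :: ('a, 'a set) lmodule. lmod sc M \<and> quasicoherent M \<and> irreducible_mod M \<longrightarrow>
      (\<exists>f. modhom (Ae_mod sc e) M f \<and> f ` mcar (Ae_mod sc e) = mcar M)"
    using gen unfolding generating_def by (rule conjunct2)
  ultimately obtain f where f: "modhom (Ae_mod sc e) ?Q f" "f ` left_ideal e = mcar ?Q"
    by auto
  have "l \<in> left_ideal l" using idem[OF l] by (rule idempotent_in_left_ideal)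
  then have "coset N l \<in> f ` left_ideal e" using f(2) Al_quotient_carrier[OF N(1)] by blast
  then have "coset N l = coset N 0"
    using modhom_Ae_Al_quotient_trivial[OF N(1) _ N(2) f(1)] gen Al_quotient_zero[OF N(1)]
    unfolding generating_def by auto
  with N(3) show False using coset_eq_iff[OF N(1)] by simp
qed

lemma AeA_eq_UNIV_if_generating:
  assumes "generating sc e"
  shows "AeA e = UNIV"
proof -
  have "x \<in> AeA e" for x
  proof -
    obtain F g where F: "finite F" "F \<subseteq> E \<times> E"
      and g: "\<And>p. p \<in> F \<Longrightarrow> g p \<in> {fst p * a * snd p |a. True}" and x: "x = (\<Sum>p\<in>F. g p)"
      using corner_decomposition[of x] by blast
    have "g p \<in> AeA e" if p: "p \<in> F" for p
    proof -
      from g[OF p] obtain a where "g p = fst p * (a * snd p)" by (auto simp: mult.assoc)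
      moreover have "fst p \<in> AeA e" using idempotent_in_AeA[OF assms] F(2) p by auto
      ultimately show ?thesis using AeA_mult_right by simp
    qed
    then show ?thesis unfolding x by (rule AeA_sum[OF F(1)])
  qed
  then show ?thesis by blast
qed

end

section \<open>Left multiplications exhaust End0_right of Ae\<close>

lemma End0_Ae_modE:
  assumes "T \<in> End0 (Ae_mod sc e)"
  obtains n \<phi> \<xi> c where "\<forall>k<(n::nat). \<phi> k \<in> mdual (Ae_mod sc e) \<and> \<xi> k \<in> left_ideal e"
    "\<forall>\<eta>\<in>left_ideal e. T \<eta> = (\<Sum>k<n. sc (c k * \<phi> k \<eta>) (\<xi> k))"
proof -
  from assms obtain n \<phi> \<xi> c
    where "\<forall>k<n. \<phi> k \<in> mdual (Ae_mod sc e) \<and> \<xi> k \<in> mcar (Ae_mod sc e)"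
      and "\<forall>\<eta>\<in>mcar (Ae_mod sc e). T \<eta> = msum (Ae_mod sc e) (\<lambda>k. msc (Ae_mod sc e) (c k * \<phi> k \<eta>) (\<xi> k)) n"
    unfolding End0_def by blast
  then show ?thesis by (intro that[of n \<phi> \<xi> c]) simp_all
qed

lemma mdual_Ae_mod_add:
  assumes "\<phi> \<in> mdual (Ae_mod sc e)" "x \<in> left_ideal e" "y \<in> left_ideal e"
  shows "\<phi> (x + y) = \<phi> x + \<phi> y"
  using assms unfolding mdual_def by simp

lemma mdual_Ae_mod_fixed:
  assumes "\<phi> \<in> mdual (Ae_mod sc e)"
  obtains f where "\<forall>\<eta>\<in>left_ideal e. \<phi> (f * \<eta>) = \<phi> \<eta>"
  using assms unfolding mdual_def by auto

lemma (in complex_algebra) End0_Ae_mod_add: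
  assumes T: "T \<in> End0 (Ae_mod sc e)" and "x \<in> left_ideal e" "y \<in> left_ideal e"
  shows "T (x + y) = T x + T y"
proof -
  obtain n \<phi> \<xi> c where \<phi>: "\<forall>k<(n::nat). \<phi> k \<in> mdual (Ae_mod sc e) \<and> \<xi> k \<in> left_ideal e"
    and T_eq: "\<forall>\<eta>\<in>left_ideal e. T \<eta> = (\<Sum>k<n. sc (c k * \<phi> k \<eta>) (\<xi> k))"
    using T by (rule End0_Ae_modE)
  have \<phi>_add: "\<phi> k (x + y) = \<phi> k x + \<phi> k y" if "k < n" for k
    using mdual_Ae_mod_add \<phi> that assms(2,3) by blast
  have "T (x + y) = (\<Sum>k<n. sc (c k * \<phi> k (x + y)) (\<xi> k))"
    using T_eq assms(2,3) left_ideal_add by blast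
  also have "\<dots> = (\<Sum>k<n. sc (c k * \<phi> k x) (\<xi> k) + sc (c k * \<phi> k y) (\<xi> k))"
    by (rule sum.cong) (simp_all add: \<phi>_add distrib_left scale_left_distrib)
  also have "\<dots> = T x + T y"
    using assms(2,3) T_eq by (simp add: sum.distrib)
  finally show ?thesis .
qed

lemma (in auf_algebra) End0_Ae_mod_local_unit:
  assumes T: "T \<in> End0 (Ae_mod sc e)"
  obtains F where "\<And>\<eta>. \<eta> \<in> left_ideal e \<Longrightarrow> T (F * \<eta>) = T \<eta>"
proof -
  obtain n \<phi> \<xi> c where \<phi>: "\<forall>k<(n::nat). \<phi> k \<in> mdual (Ae_mod sc e) \<and> \<xi> k \<in> left_ideal e"
    and T_eq: "\<forall>\<eta>\<in>left_ideal e. T \<eta> = (\<Sum>k<n. sc (c k * \<phi> k \<eta>) (\<xi> k))"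
    using T by (rule End0_Ae_modE)
  have "\<forall>k\<in>{..<n}. \<exists>f. \<forall>\<eta>\<in>left_ideal e. \<phi> k (f * \<eta>) = \<phi> k \<eta>"
    using mdual_Ae_mod_fixed \<phi> by (metis lessThan_iff)
  then obtain f where f: "\<And>k \<eta>. k < n \<Longrightarrow> \<eta> \<in> left_ideal e \<Longrightarrow> \<phi> k (f k * \<eta>) = \<phi> k \<eta>"
    by (metis lessThan_iff)
  have "finite (f ` {..<n})" by simp
  then obtain S where "\<forall>x\<in>f ` {..<n}. x * \<Sum>S = x"
    using local_right_unit by blast
  then have unit: "f k * \<Sum>S = f k" if "k < n" for k using that by simp
  have "T (\<Sum>S * \<eta>) = T \<eta>" if \<eta>: "\<eta> \<in> left_ideal e" for \<eta>
  proof -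
    have "\<phi> k (\<Sum>S * \<eta>) = \<phi> k \<eta>" if k: "k < n" for k
    proof -
      have "\<phi> k (\<Sum>S * \<eta>) = \<phi> k (f k * (\<Sum>S * \<eta>))" using f[OF k left_ideal_mult[OF \<eta>]] by simp
      also have "\<dots> = \<phi> k (f k * \<eta>)" using unit[OF k] by (simp add: mult.assoc[symmetric])
      also have "\<dots> = \<phi> k \<eta>" using f[OF k \<eta>] .
      finally show ?thesis .
    qed
    then show ?thesis using T_eq \<eta> left_ideal_mult[OF \<eta>] by simp
  qed
  then show ?thesis by (rule that)
qed

lemma (in complex_algebra) End0_right_AeA_acts_by_mult:
  assumes T: "T \<in> End0_right (Ae_mod sc e) (*) {e * x * e |x. True}" and e: "e * e = e"
    and "x \<in> AeA e"
  shows "\<exists>a. \<forall>\<eta>\<in>left_ideal e. T (x * \<eta>) = a * \<eta>"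
proof -
  have T_add: "T (\<eta> + \<eta>') = T \<eta> + T \<eta>'" if "\<eta> \<in> left_ideal e" "\<eta>' \<in> left_ideal e" for \<eta> \<eta>'
    using End0_Ae_mod_add[OF _ that] T unfolding End0_right_def by blast
  have T_right: "T (\<eta> * c) = T \<eta> * c" if "\<eta> \<in> left_ideal e" "c \<in> {e * x * e |x. True}" for \<eta> c
    using T that unfolding End0_right_def by simp
  show ?thesis
    using \<open>x \<in> AeA e\<close>
  proof (induction rule: AeA.induct)
    case zero
    have "T 0 = 0" using T_add[of 0 0] by simp
    then have "\<forall>\<eta>\<in>left_ideal e. T (0 * \<eta>) = 0 * \<eta>" by simp
    then show ?case by (rule exI)
  next
    case (generator u v)
    have "T (u * e * v * \<eta>) = T (u * e) * e * v * \<eta>" if "\<eta> \<in> left_ideal e" for \<eta>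
    proof -
      from that obtain y where y: "\<eta> = y * e" unfolding left_ideal_def by blast
      have "(u * e) * (e * (v * y) * e) = u * (e * e) * v * y * e" by (simp add: mult.assoc)
      also have "\<dots> = u * e * v * \<eta>" using e y by (simp add: mult.assoc)
      finally have "u * e * v * \<eta> = (u * e) * (e * (v * y) * e)" ..
      then have "T (u * e * v * \<eta>) = T (u * e) * (e * (v * y) * e)"
        using T_right[of "u * e" "e * (v * y) * e"] by auto
      with y show ?thesis by (simp add: mult.assoc)
    qed
    then show ?case by blast
  next
    case (add x y)
    from add.IH obtain a b where a: "\<forall>\<eta>\<in>left_ideal e. T (x * \<eta>) = a * \<eta>"
      and b: "\<forall>\<eta>\<in>left_ideal e. T (y * \<eta>) = b * \<eta>" by blast
    have "T ((x + y) * \<eta>) = (a + b) * \<eta>" if "\<eta> \<in> left_ideal e" for \<eta>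
      using T_add[OF left_ideal_mult left_ideal_mult, OF that that] a b that by (simp add: distrib_right)
    then show ?case by blast
  qed
qed

lemma (in auf_algebra) End0_right_eq_Lmul:
  assumes full: "AeA e = UNIV" and e: "e * e = e"
    and T: "T \<in> End0_right (Ae_mod sc e) (*) {e * x * e |x. True}"
  obtains a where "T = Lmul sc e a"
proof -
  have T0: "T \<in> End0 (Ae_mod sc e)" using T unfolding End0_right_def by blast
  obtain F where F: "\<And>\<eta>. \<eta> \<in> left_ideal e \<Longrightarrow> T (F * \<eta>) = T \<eta>"
    using End0_Ae_mod_local_unit[OF T0] by blast
  obtain a where a: "\<forall>\<eta>\<in>left_ideal e. T (F * \<eta>) = a * \<eta>"
    using End0_right_AeA_acts_by_mult[OF T e] full by blast
  have "T \<eta> = Lmul sc e a \<eta>" for \<eta>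
    using F a T0 unfolding Lmul_def End0_def by auto
  then show ?thesis by (intro that ext)
qed

lemma (in auf_algebra) inj_Lmul:
  assumes full: "AeA e = UNIV"
  shows "inj (Lmul sc e)"
proof (rule injI)
  fix a b assume eq: "Lmul sc e a = Lmul sc e b"
  have "(a - b) * (y * e) = 0" for y
    using fun_cong[OF eq, of "y * e"] by (simp add: Lmul_def left_diff_distrib)
  then have annihilates: "(a - b) * x = 0" for x
    using AeA_annihilator full by blast
  obtain S where "(a - b) * \<Sum>S = a - b"
    using local_right_unit[of "{a - b}"] by auto
  with annihilates show "a = b" by simp
qed

section \<open>Left multiplications have finite rank on Ae\<close>

(* Unlike End0, which uses an initial segment of nat, the index set is arbitrary, so that
   representations of summands can be combined over a Sigma set. *)
definition left_mult_repr ::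
    "(complex \<Rightarrow> 'a \<Rightarrow> 'a) \<Rightarrow> 'a::ring \<Rightarrow> 'a \<Rightarrow> 'i set \<Rightarrow> ('i \<Rightarrow> 'a \<Rightarrow> complex) \<Rightarrow> ('i \<Rightarrow> 'a) \<Rightarrow> bool"
  where "left_mult_repr sc e a I \<phi> \<xi> \<longleftrightarrow> finite I \<and>
    (\<forall>i\<in>I. \<phi> i \<in> mdual (Ae_mod sc e) \<and> \<xi> i \<in> left_ideal e) \<and>
    (\<forall>\<eta>\<in>left_ideal e. a * \<eta> = (\<Sum>i\<in>I. sc (\<phi> i \<eta>) (\<xi> i)))"

lemma left_mult_repr_sum:
  assumes "finite P" "\<And>p. p \<in> P \<Longrightarrow> left_mult_repr sc e (g p) (I p) (\<phi> p) (\<xi> p)"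
  shows "left_mult_repr sc e (\<Sum>p\<in>P. g p) (SIGMA p:P. I p) (\<lambda>(p, i). \<phi> p i) (\<lambda>(p, i). \<xi> p i)"
  unfolding left_mult_repr_def
proof (intro conjI ballI)
  have fin: "\<forall>p\<in>P. finite (I p)" using assms(2) unfolding left_mult_repr_def by blast
  then show "finite (SIGMA p:P. I p)" using assms(1) by blast
  fix \<eta> assume \<eta>: "\<eta> \<in> left_ideal e"
  have "(\<Sum>p\<in>P. g p) * \<eta> = (\<Sum>p\<in>P. \<Sum>i\<in>I p. sc (\<phi> p i \<eta>) (\<xi> p i))"
    using assms(2) \<eta> unfolding left_mult_repr_def by (simp add: sum_distrib_right)
  also have "\<dots> = (\<Sum>(p, i)\<in>(SIGMA p:P. I p). sc (\<phi> p i \<eta>) (\<xi> p i))"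
    by (rule sum.Sigma[OF assms(1) fin])
  finally show "(\<Sum>p\<in>P. g p) * \<eta> = (\<Sum>i\<in>(SIGMA p:P. I p). sc ((\<lambda>(p, i). \<phi> p i) i \<eta>) ((\<lambda>(p, i). \<xi> p i) i))"
    by (simp add: case_prod_beta)
next
  fix pi assume "pi \<in> (SIGMA p:P. I p)"
  then show "(\<lambda>(p, i). \<phi> p i) pi \<in> mdual (Ae_mod sc e)"
    using assms(2) unfolding left_mult_repr_def by auto
next
  fix pi assume "pi \<in> (SIGMA p:P. I p)"
  then show "(\<lambda>(p, i). \<xi> p i) pi \<in> left_ideal e"
    using assms(2) unfolding left_mult_repr_def by auto
qed

lemma Lmul_in_End0_right_if_repr:
  assumes "left_mult_repr sc e a I \<phi> \<xi>"
  shows "Lmul sc e a \<in> End0_right (Ae_mod sc e) (*) {e * x * e |x. True}"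
proof -
  from assms have I: "finite I" and \<phi>: "\<forall>i\<in>I. \<phi> i \<in> mdual (Ae_mod sc e) \<and> \<xi> i \<in> left_ideal e"
    and a: "\<forall>\<eta>\<in>left_ideal e. a * \<eta> = (\<Sum>i\<in>I. sc (\<phi> i \<eta>) (\<xi> i))"
    unfolding left_mult_repr_def by blast+
  obtain h where h: "bij_betw h {..<card I} I"
    using ex_bij_betw_nat_finite[OF I] by (auto simp: atLeast0LessThan)
  then have h_I: "h k \<in> I" if "k < card I" for k using that by (auto simp: bij_betw_def)
  have "Lmul sc e a \<eta> = (\<Sum>k<card I. sc (1 * \<phi> (h k) \<eta>) (\<xi> (h k)))" if "\<eta> \<in> left_ideal e" for \<eta>
    using that a sum.reindex_bij_betw[OF h, of "\<lambda>i. sc (\<phi> i \<eta>) (\<xi> i)"] by (simp add: Lmul_def)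
  with \<phi> h_I have "Lmul sc e a \<in> End0 (Ae_mod sc e)"
    unfolding End0_def by (auto simp: Lmul_def intro!: exI[of _ "card I"] exI[of _ "\<lambda>_. 1"]
        exI[of _ "\<lambda>k. \<phi> (h k)"] exI[of _ "\<lambda>k. \<xi> (h k)"])
  moreover have "Lmul sc e a (\<eta> * c) = Lmul sc e a \<eta> * c"
    if "\<eta> \<in> left_ideal e" "c \<in> {e * x * e |x. True}" for \<eta> c
  proof -
    from that obtain y x where "\<eta> = y * e" "c = e * x * e" unfolding left_ideal_def by blast
    then have "\<eta> * c = (y * e * e * x) * e" by (simp add: mult.assoc)
    then have "\<eta> * c \<in> left_ideal e" by simp
    with that show ?thesis by (simp add: Lmul_def mult.assoc)
  qed
  ultimately show ?thesis unfolding End0_right_def by simp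
qed

lemma (in complex_algebra) left_mult_repr_corner:
  assumes j: "j * j = j" and g: "g * j = g"
    and B: "finite B" "independent B" "B \<subseteq> {j * y * e |y. True}" "{j * y * e |y. True} \<subseteq> span B"
  shows "left_mult_repr sc e g B (\<lambda>b \<eta>. representation B (j * \<eta>) b) (\<lambda>b. g * b)"
proof -
  have span: "j * \<eta> \<in> span B" if "\<eta> \<in> left_ideal e" for \<eta>
  proof -
    from that obtain y where "\<eta> = y * e" unfolding left_ideal_def by blast
    then have "j * \<eta> = j * y * e" by (simp add: mult.assoc)
    with B(4) show ?thesis by blast
  qed
  have "(\<lambda>\<eta>. representation B (j * \<eta>) b) \<in> mdual (Ae_mod sc e)" for b
    unfolding mdual_def Ae_mod_simps
  proof (intro CollectI conjI ballI allI exI[of _ j])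
    fix x y assume "x \<in> left_ideal e" "y \<in> left_ideal e"
    then show "representation B (j * (x + y)) b = representation B (j * x) b + representation B (j * y) b"
      using representation_add[OF B(2) span span] by (simp add: distrib_left)
  next
    fix c x assume "x \<in> left_ideal e"
    then show "representation B (j * sc c x) b = c * representation B (j * x) b"
      using representation_scale[OF B(2) span] by simp
  next
    fix \<eta> show "representation B (j * (j * \<eta>)) b = representation B (j * \<eta>) b"
      using j by (simp add: mult.assoc[symmetric])
  qed (rule j)
  moreover have "g * b \<in> left_ideal e" if "b \<in> B" for b
  proof -
    from that B(3) obtain y where "b = j * y * e" by blast
    then have "g * b = (g * j * y) * e" by (simp add: mult.assoc)
    then show ?thesis by simp
  qed
  moreover have "g * \<eta> = (\<Sum>b\<in>B. sc (representation B (j * \<eta>) b) (g * b))"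
    if "\<eta> \<in> left_ideal e" for \<eta>
  proof -
    have "g * \<eta> = g * (j * \<eta>)" using g by (simp add: mult.assoc[symmetric])
    also have "j * \<eta> = (\<Sum>b\<in>B. sc (representation B (j * \<eta>) b) b)"
      using sum_representation_eq[OF B(2) span[OF that] B(1) order_refl] by simp
    finally show ?thesis by (simp add: sum_distrib_left)
  qed
  ultimately show ?thesis unfolding left_mult_repr_def using B(1) by blast
qed

context auf_algebra
begin

lemma corner_basis:
  assumes j: "j \<in> E"
  obtains B where "finite B" "independent B" "B \<subseteq> {j * y * x |y. True}" "{j * y * x |y. True} \<subseteq> span B"
proof -
  let ?V = "{j * y * x |y. True}"
  obtain R where R: "finite R" "R \<subseteq> E" "x * \<Sum>R = x"
    using local_right_unit[of "{x}"] by auto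
  have "\<forall>r\<in>R. \<exists>C. finite C \<and> {j * a * r |a. True} \<subseteq> span C"
  proof
    fix r assume "r \<in> R"
    with R(2) have "r \<in> E" by blast
    with j show "\<exists>C. finite C \<and> {j * a * r |a. True} \<subseteq> span C" by (rule corner_finite_span)
  qed
  then obtain C where C: "\<forall>r\<in>R. finite (C r) \<and> {j * a * r |a. True} \<subseteq> span (C r)"
    by (rule bchoice[THEN exE])
  have "?V \<subseteq> span (\<Union>r\<in>R. C r)"
  proof
    fix v assume "v \<in> ?V"
    then obtain y where "v = j * y * x" by blast
    with R(3) have "v = j * y * (x * \<Sum>R)" by simp
    also have "\<dots> = (\<Sum>r\<in>R. j * (y * x) * r)" by (simp add: sum_distrib_left mult.assoc)
    also have "\<dots> \<in> span (\<Union>r\<in>R. C r)"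
    proof (rule span_sum)
      fix r assume "r \<in> R"
      have "j * (y * x) * r \<in> {j * a * r |a. True}" by blast
      with C \<open>r \<in> R\<close> have "j * (y * x) * r \<in> span (C r)" by blast
      moreover have "span (C r) \<subseteq> span (\<Union>r\<in>R. C r)" using \<open>r \<in> R\<close> by (intro span_mono) blast
      ultimately show "j * (y * x) * r \<in> span (\<Union>r\<in>R. C r)" by blast
    qed
    finally show "v \<in> span (\<Union>r\<in>R. C r)" .
  qed
  obtain B where B: "B \<subseteq> ?V" "independent B" "?V \<subseteq> span B"
    by (rule basis_exists)
  have "finite (\<Union>r\<in>R. C r)" using R(1) C by simp
  moreover have "B \<subseteq> span (\<Union>r\<in>R. C r)" using B(1) \<open>?V \<subseteq> span (\<Union>r\<in>R. C r)\<close> by (rule order_trans)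
  ultimately have "finite B" using independent_span_bound B(2) by blast
  with B show ?thesis by (intro that)
qed

lemma Lmul_in_End0_right: "Lmul sc e a \<in> End0_right (Ae_mod sc e) (*) {e * x * e |x. True}"
proof -
  obtain F g where F: "finite F" "F \<subseteq> E \<times> E"
    and g: "\<And>p. p \<in> F \<Longrightarrow> g p \<in> {fst p * x * snd p |x. True}" and a: "a = (\<Sum>p\<in>F. g p)"
    using corner_decomposition[of a] by blast
  have "\<forall>p\<in>F. \<exists>B. finite B \<and> independent B \<and> B \<subseteq> {snd p * y * e |y. True} \<and>
      {snd p * y * e |y. True} \<subseteq> span B"
  proof
    fix p assume "p \<in> F"
    with F(2) have "snd p \<in> E" by auto
    then show "\<exists>B. finite B \<and> independent B \<and> B \<subseteq> {snd p * y * e |y. True} \<and>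
        {snd p * y * e |y. True} \<subseteq> span B"
      by (rule corner_basis) blast
  qed
  then obtain B where B: "\<forall>p\<in>F. finite (B p) \<and> independent (B p) \<and>
      B p \<subseteq> {snd p * y * e |y. True} \<and> {snd p * y * e |y. True} \<subseteq> span (B p)"
    by (auto dest: bchoice)
  have "left_mult_repr sc e (g p) (B p) (\<lambda>b \<eta>. representation (B p) (snd p * \<eta>) b) (\<lambda>b. g p * b)"
    if p: "p \<in> F" for p
  proof (rule left_mult_repr_corner)
    show "snd p * snd p = snd p" using F(2) p idem by auto
    from g[OF p] obtain x where "g p = fst p * x * snd p" by blast
    then show "g p * snd p = g p" using \<open>snd p * snd p = snd p\<close> by (simp add: mult.assoc)
  qed (use B p in blast)+
  then have "left_mult_repr sc e a (SIGMA p:F. B p)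
      (\<lambda>(p, b) \<eta>. representation (B p) (snd p * \<eta>) b) (\<lambda>(p, b). g p * b)"
    unfolding a by (rule left_mult_repr_sum[OF F(1)])
  then show ?thesis by (rule Lmul_in_End0_right_if_repr)
qed

end

lemma (in auf_algebra) bij_betw_Lmul:
  assumes gen: "generating sc e"
  shows "bij_betw (Lmul sc e) UNIV (End0_right (Ae_mod sc e) (*) {e * x * e |x. True})"
  unfolding bij_betw_def
proof
  have full: "AeA e = UNIV" using gen by (rule AeA_eq_UNIV_if_generating)
  then show "inj (Lmul sc e)" by (rule inj_Lmul)
  have e: "e * e = e" using gen by (simp add: generating_def)
  show "range (Lmul sc e) = End0_right (Ae_mod sc e) (*) {e * x * e |x. True}"
  proof (intro equalityI subsetI)
    fix T assume "T \<in> range (Lmul sc e)"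
    then show "T \<in> End0_right (Ae_mod sc e) (*) {e * x * e |x. True}"
      using Lmul_in_End0_right by blast
  next
    fix T assume "T \<in> End0_right (Ae_mod sc e) (*) {e * x * e |x. True}"
    then obtain a where "T = Lmul sc e a" by (rule End0_right_eq_Lmul[OF full e])
    then show "T \<in> range (Lmul sc e)" by simp
  qed
qed

theorem lemma11p6:
  fixes sc :: "complex \<Rightarrow> 'a::ring \<Rightarrow> 'a" and e :: 'a
  assumes "calg sc" and "AUF sc" and "generating sc e"
  shows "bij_betw (Lmul sc e) UNIV (End0_right (Ae_mod sc e) (*) {e * x * e | x. True})
    \<and> (\<forall>a b. Lmul sc e (a + b) = (\<lambda>\<eta>. Lmul sc e a \<eta> + Lmul sc e b \<eta>))
    \<and> (\<forall>c a. Lmul sc e (sc c a) = (\<lambda>\<eta>. sc c (Lmul sc e a \<eta>)))"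
proof -
  obtain E where "auf_algebra sc E" using AUF_imp_auf_algebra[OF assms(1,2)] .
  then interpret auf_algebra sc E .
  show ?thesis
    using bij_betw_Lmul[OF assms(3)] by (simp add: Lmul_def fun_eq_iff distrib_right)
qed

end
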